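(* Let $\Lambda,\alpha,r$ be positive integers with $\alpha\in[\Lambda-1]$ and $r\in[\Lambda-\alpha]$. Let $D_{\Lambda,r,\alpha}$ be the $\binom{\Lambda}{r}\times\binom{\Lambda}{\alpha}$ array defined below. Then $D_{\Lambda,r,\alpha}$ is a $\binom{r+\alpha}{r}$-regular $\left(\binom{\Lambda}{\alpha},\binom{\Lambda}{r},\binom{\Lambda}{\alpha+r}\right)$ MRA. Moreover, the symbol $*$ appears exactly $\binom{\Lambda}{r}-\binom{\Lambda-\alpha}{r}$ times in each column.
   Context: Notation: $[0,n)=\{0,1,\dots,n-1\}$, $[n]=\{1,\dots,n\}$. Construction (Algorithm 1): Order all subsets of $[0,\Lambda)$ of size $\alpha+r$ lexicographically and, for such a subset $T'$, let $y_{\alpha+r}(T')\in[0,\binom{\Lambda}{\alpha+r})$ be its position in this order minus 1. The array $D_{\Lambda,r,\alpha}$ has rows indexed by the $r$-subsets $T\subset[0,\Lambda)$ and columns indexed by the $\alpha$-subsets $U\subset[0,\Lambda)$, and entries $d_{T,U}=*$ if $T\cap U\neq\emptyset$, and $d_{T,U}=y_{\alpha+r}(T\cup U)$ if $T\cap U=\emptyset$. Map-Reduce Array (MRA): For positive integers $K,F,S$, an $F\times K$ array $P=[p_{f,k}]$, whose entries are either the symbol $*$ or integers from $[0,S)$, with every integer of $[0,S)$ occurring in $P$, is a $(K,F,S)$ MRA if: (C1) each integer occurs more than once in $P$; (C2) whenever two distinct entries satisfy $p_{f_1,k_1}=p_{f_2,k_2}=s$ with $s$ an integer, then $f_1\neq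 f_2$, $k_1\neq k_2$, and $p_{f_1,k_2}=p_{f_2,k_1}=*$. It is a $g$-regular MRA (for a constant $g\ge 2$) if it satisfies (C2) and every integer occurs exactly $g$ times. *)

theory Defs
  imports Main
begin

text \<open>Arrays: an array with rows indexed by a finite set Rows and columns indexed by a
finite set Cols; an entry is None (the symbol *) or Some s (the integer s).\<close>

definition MRA :: "nat \<Rightarrow> nat \<Rightarrow> nat \<Rightarrow> 'f set \<Rightarrow> 'k set \<Rightarrow> ('f \<Rightarrow> 'k \<Rightarrow> nat option) \<Rightarrow> bool" where
  "MRA K F S Rows Cols P \<longleftrightarrow>
     0 < K \<and> 0 < F \<and> 0 < S \<and>
     finite Rows \<and> finite Cols \<and> card Rows = F \<and> card Cols = K \<and>
     (\<forall>f\<in>Rows. \<forall>k\<in>Cols. \<forall>s. P f k = Some s \<longrightarrow> s < S) \<and>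
     (\<forall>s<S. \<exists>f\<in>Rows. \<exists>k\<in>Cols. P f k = Some s) \<and>
     \<comment> \<open>(C1)\<close>
     (\<forall>s<S. card {(f, k). f \<in> Rows \<and> k \<in> Cols \<and> P f k = Some s} > 1) \<and>
     \<comment> \<open>(C2)\<close>
     (\<forall>f1\<in>Rows. \<forall>f2\<in>Rows. \<forall>k1\<in>Cols. \<forall>k2\<in>Cols. \<forall>s.
        (f1, k1) \<noteq> (f2, k2) \<and> P f1 k1 = Some s \<and> P f2 k2 = Some s \<longrightarrow>
        f1 \<noteq> f2 \<and> k1 \<noteq> k2 \<and> P f1 k2 = None \<and> P f2 k1 = None)"

definition regular_MRA :: "nat \<Rightarrow> nat \<Rightarrow> nat \<Rightarrow> nat \<Rightarrow> 'f set \<Rightarrow> 'k set \<Rightarrow> ('f \<Rightarrow> 'k \<Rightarrow> nat option) \<Rightarrow> bool" where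
  "regular_MRA g K F S Rows Cols P \<longleftrightarrow>
     2 \<le> g \<and> MRA K F S Rows Cols P \<and>
     (\<forall>s<S. card {(f, k). f \<in> Rows \<and> k \<in> Cols \<and> P f k = Some s} = g)"

definition lex_rank :: "nat \<Rightarrow> nat \<Rightarrow> nat set \<Rightarrow> nat" where
  "lex_rank L k T' = card {T''. T'' \<subseteq> {0..<L} \<and> card T'' = k \<and>
      lexordp (<) (sorted_list_of_set T'') (sorted_list_of_set T')}"

definition subsets_of_size :: "nat \<Rightarrow> nat \<Rightarrow> nat set set" where
  "subsets_of_size L k = {T. T \<subseteq> {0..<L} \<and> card T = k}"

definition D_arr :: "nat \<Rightarrow> nat \<Rightarrow> nat \<Rightarrow> nat set \<Rightarrow> nat set \<Rightarrow> nat option" where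
  "D_arr L r \<alpha> T U = (if T \<inter> U \<noteq> {} then None else Some (lex_rank L (\<alpha> + r) (T \<union> U)))"

end

theory Submission
  imports Defs
begin

text \<open>An entry of D at a disjoint pair (T, U) is the lexicographic rank of T \<union> U, and this
rank is a bijection from the (\<alpha>+r)-subsets onto [0, L choose (\<alpha>+r)). So the occurrences of
the rank of W are exactly the pairs (T, W - T) with T an r-subset of W: there are
(\<alpha>+r) choose r of them. Two distinct such pairs have distinct rows T1 \<noteq> T2 of equal size,
so neither T1 \<subseteq> T2 nor T2 \<subseteq> T1, which forces T1 \<inter> (W - T2) and T2 \<inter> (W - T1) to be
nonempty: the crossed entries are stars.\<close>

lemma lexordp_less_conv_ord_lexordp:
  "List.lexordp (<) = (ord_class.lexordp :: 'a::linorder list \<Rightarrow> 'a list \<Rightarrow> bool)"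
  by (simp add: fun_eq_iff List.lexordp_def linorder_class.lexordp_conv_lexord)

lemma bij_betw_rank_strict_total_order:
  fixes R :: "'a \<Rightarrow> 'a \<Rightarrow> bool"
  assumes fin: "finite A" and irrefl: "\<And>x. \<not> R x x"
    and trans: "\<And>x y z. R x y \<Longrightarrow> R y z \<Longrightarrow> R x z"
    and total: "\<And>x y. x \<in> A \<Longrightarrow> y \<in> A \<Longrightarrow> R x y \<or> x = y \<or> R y x"
  shows "bij_betw (\<lambda>x. card {y\<in>A. R y x}) A {0..<card A}"
proof -
  let ?rank = "\<lambda>x. card {y\<in>A. R y x}"
  have rank_mono: "?rank x < ?rank y" if "x \<in> A" "R x y" for x y
  proof (rule psubset_card_mono)
    show "finite {z\<in>A. R z y}" using fin by simp
    show "{z\<in>A. R z x} \<subset> {z\<in>A. R z y}" using that irrefl trans by blast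
  qed
  have inj: "inj_on ?rank A"
    by (rule inj_onI) (metis total rank_mono less_irrefl)
  have "?rank x < card A" if "x \<in> A" for x
  proof -
    have "{y\<in>A. R y x} \<subset> A" using that irrefl by blast
    then show ?thesis using fin by (rule psubset_card_mono[rotated])
  qed
  then have "?rank ` A \<subseteq> {0..<card A}" by auto
  moreover have "card (?rank ` A) = card {0..<card A}" using card_image[OF inj] by simp
  ultimately have "?rank ` A = {0..<card A}" by (intro card_subset_eq) auto
  then show ?thesis using inj by (simp add: bij_betw_def)
qed

lemma mem_subsets_of_size_iff: "T \<in> subsets_of_size L k \<longleftrightarrow> T \<subseteq> {0..<L} \<and> card T = k"
  by (simp add: subsets_of_size_def)

lemma finite_subsets_of_size: "finite (subsets_of_size L k)"
  unfolding subsets_of_size_def by (rule finite_subset[of _ "Pow {0..<L}"]) auto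

lemma finite_if_mem_subsets_of_size: "T \<in> subsets_of_size L k \<Longrightarrow> finite T"
  by (auto simp: mem_subsets_of_size_iff intro: finite_subset)

lemma card_subsets_of_size: "card (subsets_of_size L k) = L choose k"
  unfolding subsets_of_size_def using n_subsets[of "{0..<L}" k] by simp

lemma bij_betw_lex_rank: "bij_betw (lex_rank L k) (subsets_of_size L k) {0..<L choose k}"
proof -
  define R where "R X Y \<longleftrightarrow> ord_class.lexordp (sorted_list_of_set X) (sorted_list_of_set (Y :: nat set))"
    for X Y
  have "lex_rank L k = (\<lambda>X. card {Y\<in>subsets_of_size L k. R Y X})"
    unfolding lex_rank_def subsets_of_size_def R_def lexordp_less_conv_ord_lexordp by auto
  moreover have "bij_betw (\<lambda>X. card {Y\<in>subsets_of_size L k. R Y X}) (subsets_of_size L k)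
      {0..<card (subsets_of_size L k)}"
  proof (rule bij_betw_rank_strict_total_order[OF finite_subsets_of_size])
    show "\<And>X. \<not> R X X" unfolding R_def by (rule lexordp_irreflexive')
    show "\<And>X Y Z. R X Y \<Longrightarrow> R Y Z \<Longrightarrow> R X Z" unfolding R_def by (rule lexordp_trans)
    fix X Y assume "X \<in> subsets_of_size L k" "Y \<in> subsets_of_size L k"
    then have "finite X" "finite Y" by (simp_all add: finite_if_mem_subsets_of_size)
    then show "R X Y \<or> X = Y \<or> R Y X"
      unfolding R_def using lexordp_linear sorted_list_of_set_inject by metis
  qed
  ultimately show ?thesis by (simp add: card_subsets_of_size)
qed

lemma inj_on_lex_rank: "inj_on (lex_rank L k) (subsets_of_size L k)"
  using bij_betw_lex_rank bij_betw_imp_inj_on by blast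

lemma D_arr_eq_Some_iff:
  assumes "T \<in> subsets_of_size L r" and "U \<in> subsets_of_size L \<alpha>"
  shows "D_arr L r \<alpha> T U = Some s \<longleftrightarrow>
     T \<inter> U = {} \<and> T \<union> U \<in> subsets_of_size L (\<alpha> + r) \<and> lex_rank L (\<alpha> + r) (T \<union> U) = s"
proof -
  have "T \<union> U \<in> subsets_of_size L (\<alpha> + r)" if "T \<inter> U = {}"
    using assms that finite_if_mem_subsets_of_size[OF assms(1)]
      finite_if_mem_subsets_of_size[OF assms(2)]
    by (auto simp: mem_subsets_of_size_iff card_Un_disjoint)
  then show ?thesis unfolding D_arr_def by auto
qed

lemma D_arr_occurrences:
  assumes W: "W \<in> subsets_of_size L (\<alpha> + r)"
  shows "{(T, U). T \<in> subsets_of_size L r \<and> U \<in> subsets_of_size L \<alpha>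
            \<and> D_arr L r \<alpha> T U = Some (lex_rank L (\<alpha> + r) W)}
       = (\<lambda>T. (T, W - T)) ` {T. T \<subseteq> W \<and> card T = r}" (is "?occ = ?splits")
proof
  show "?occ \<subseteq> ?splits"
  proof clarify
    fix T U assume T: "T \<in> subsets_of_size L r" and U: "U \<in> subsets_of_size L \<alpha>"
      and "D_arr L r \<alpha> T U = Some (lex_rank L (\<alpha> + r) W)"
    then have "T \<inter> U = {}" and "T \<union> U = W"
      using D_arr_eq_Some_iff[OF T U] inj_onD[OF inj_on_lex_rank _ _ W] by auto
    then show "(T, U) \<in> ?splits" using T by (auto simp: mem_subsets_of_size_iff)
  qed
  show "?splits \<subseteq> ?occ"
  proof (rule image_subsetI)
    fix T assume "T \<in> {T. T \<subseteq> W \<and> card T = r}"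
    then have "T \<subseteq> W" "card T = r" by simp_all
    moreover have "finite W" "W \<subseteq> {0..<L}" "card W = \<alpha> + r"
      using W finite_if_mem_subsets_of_size[OF W] by (auto simp: mem_subsets_of_size_iff)
    ultimately have "T \<in> subsets_of_size L r" "W - T \<in> subsets_of_size L \<alpha>"
      by (auto simp: mem_subsets_of_size_iff card_Diff_subset finite_subset)
    moreover have "T \<union> (W - T) = W" using \<open>T \<subseteq> W\<close> by auto
    ultimately show "(T, W - T) \<in> ?occ"
      using D_arr_eq_Some_iff W by auto
  qed
qed

lemma card_D_arr_occurrences:
  assumes "s < L choose (\<alpha> + r)"
  shows "card {(T, U). T \<in> subsets_of_size L r \<and> U \<in> subsets_of_size L \<alpha>
                \<and> D_arr L r \<alpha> T U = Some s} = (r + \<alpha>) choose r"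
proof -
  have "s \<in> lex_rank L (\<alpha> + r) ` subsets_of_size L (\<alpha> + r)"
    using assms bij_betw_imp_surj_on[OF bij_betw_lex_rank] by simp
  then obtain W where W: "W \<in> subsets_of_size L (\<alpha> + r)" and s: "s = lex_rank L (\<alpha> + r) W"
    by blast
  have "finite W" "card W = \<alpha> + r"
    using W finite_if_mem_subsets_of_size[OF W] by (auto simp: mem_subsets_of_size_iff)
  have "inj_on (\<lambda>T. (T, W - T)) {T. T \<subseteq> W \<and> card T = r}" by (auto simp: inj_on_def)
  then have "card ((\<lambda>T. (T, W - T)) ` {T. T \<subseteq> W \<and> card T = r}) = card W choose r"
    by (simp add: card_image n_subsets[OF \<open>finite W\<close>])
  then show ?thesis
    unfolding s D_arr_occurrences[OF W] using \<open>card W = \<alpha> + r\<close> by (simp add: add.commute)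
qed

lemma disjoint_split_cross_intersect:
  assumes "finite T1" and "T1 \<union> U1 = T2 \<union> U2" and "T1 \<inter> U1 = {}"
    and "card T1 = card T2" and "T1 \<noteq> T2"
  shows "T2 \<inter> U1 \<noteq> {}"
proof
  assume "T2 \<inter> U1 = {}"
  then have "T2 \<subseteq> T1" using assms(2) by blast
  then show False using assms card_subset_eq by metis
qed

lemma D_arr_equal_entries:
  assumes T1: "T1 \<in> subsets_of_size L r" and T2: "T2 \<in> subsets_of_size L r"
    and U1: "U1 \<in> subsets_of_size L \<alpha>" and U2: "U2 \<in> subsets_of_size L \<alpha>"
    and "(T1, U1) \<noteq> (T2, U2)"
    and "D_arr L r \<alpha> T1 U1 = Some s" and "D_arr L r \<alpha> T2 U2 = Some s"
  shows "T1 \<noteq> T2 \<and> U1 \<noteq> U2 \<and> D_arr L r \<alpha> T1 U2 = None \<and> D_arr L r \<alpha> T2 U1 = None"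
proof -
  have disj: "T1 \<inter> U1 = {}" "T2 \<inter> U2 = {}"
    and W: "T1 \<union> U1 = T2 \<union> U2"
    using assms D_arr_eq_Some_iff[OF T1 U1] D_arr_eq_Some_iff[OF T2 U2]
      inj_onD[OF inj_on_lex_rank[of L "\<alpha> + r"]]
    by auto
  have "T1 \<noteq> T2" and "U1 \<noteq> U2" using assms(5) disj W by blast+
  moreover have "card T1 = card T2" using T1 T2 by (simp add: mem_subsets_of_size_iff)
  then have "T2 \<inter> U1 \<noteq> {}" "T1 \<inter> U2 \<noteq> {}"
    using disjoint_split_cross_intersect finite_if_mem_subsets_of_size T1 T2 disj W \<open>T1 \<noteq> T2\<close>
    by metis+
  ultimately show ?thesis by (auto simp: D_arr_def)
qed

lemma card_D_arr_stars_in_column: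
  assumes U: "U \<in> subsets_of_size L \<alpha>"
  shows "card {T \<in> subsets_of_size L r. D_arr L r \<alpha> T U = None} = (L choose r) - ((L - \<alpha>) choose r)"
proof -
  let ?avoiding = "{T. T \<subseteq> {0..<L} - U \<and> card T = r}"
  have "{T \<in> subsets_of_size L r. D_arr L r \<alpha> T U = None} = subsets_of_size L r - ?avoiding"
    unfolding D_arr_def subsets_of_size_def by auto
  moreover have sub: "?avoiding \<subseteq> subsets_of_size L r" by (auto simp: mem_subsets_of_size_iff)
  moreover have "card ({0..<L} - U) = L - \<alpha>"
    using U finite_if_mem_subsets_of_size[OF U] by (simp add: mem_subsets_of_size_iff card_Diff_subset)
  then have "card ?avoiding = (L - \<alpha>) choose r" using n_subsets[of "{0..<L} - U" r] by simp
  ultimately show ?thesis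
    using card_Diff_subset[OF finite_subset[OF sub finite_subsets_of_size] sub]
    by (simp add: card_subsets_of_size)
qed

lemma two_le_binomial_add:
  assumes "0 < r" and "0 < a"
  shows "2 \<le> (r + a) choose r"
proof -
  obtain r' where r: "r = Suc r'" using assms(1) by (cases r) auto
  have "(r + a) choose r = ((r' + a) choose r') + ((r' + a) choose r)" using r by simp
  moreover have "0 < (r' + a) choose r'" by simp
  moreover have "0 < (r' + a) choose r" using r assms(2) by (simp add: zero_less_binomial_iff)
  ultimately show ?thesis by linarith
qed

theorem mainTheorem5:
  fixes L r \<alpha> :: nat
  assumes "1 \<le> \<alpha>" and "\<alpha> \<le> L - 1" and "1 \<le> r" and "r \<le> L - \<alpha>"
  shows "regular_MRA ((r + \<alpha>) choose r) (L choose \<alpha>) (L choose r) (L choose (\<alpha> + r))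
           (subsets_of_size L r) (subsets_of_size L \<alpha>) (D_arr L r \<alpha>)
       \<and> (\<forall>U \<in> subsets_of_size L \<alpha>.
            card {T \<in> subsets_of_size L r. D_arr L r \<alpha> T U = None}
              = (L choose r) - ((L - \<alpha>) choose r))"
proof -
  have sizes: "\<alpha> + r \<le> L" "\<alpha> \<le> L" "r \<le> L" using assms by auto
  have g: "2 \<le> (r + \<alpha>) choose r" using assms by (intro two_le_binomial_add) auto
  have values_in_range: "s < L choose (\<alpha> + r)" if "D_arr L r \<alpha> T U = Some s"
    and "T \<in> subsets_of_size L r" "U \<in> subsets_of_size L \<alpha>" for T U s
    using that D_arr_eq_Some_iff bij_betw_lex_rank[of L "\<alpha> + r"] by (auto dest: bij_betwE)
  have every_value_occurs: "\<exists>T\<in>subsets_of_size L r. \<exists>U\<in>subsets_of_size L \<alpha>. D_arr L r \<alpha> T U = Some s"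
    if "s < L choose (\<alpha> + r)" for s
  proof -
    have "{(T, U). T \<in> subsets_of_size L r \<and> U \<in> subsets_of_size L \<alpha>
        \<and> D_arr L r \<alpha> T U = Some s} \<noteq> {}"
      using card_D_arr_occurrences[OF that] g by (intro notI) simp
    then show ?thesis by blast
  qed
  show ?thesis
    unfolding regular_MRA_def MRA_def
    using sizes g values_in_range every_value_occurs card_D_arr_occurrences D_arr_equal_entries
      card_D_arr_stars_in_column
    by (simp add: finite_subsets_of_size card_subsets_of_size) blast
qed

end
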